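(* Let $K_1\subset\mathbb{R}^n$, $K_2\subset\wedge^2\mathbb{R}^n,\ldots,K_n\subset\wedge^n\mathbb{R}^n$ be proper cones. Suppose that for every $j=2,\ldots,n$ there exists a basis $e_1'(j),\ldots,e_n'(j)$ of $\mathbb{R}^n$ such that $K_j\subseteq K_j'$, where $K_j'\subset\wedge^j\mathbb{R}^n$ is an exterior basic cone defined by this basis. Then for every $j=2,\ldots,n$ the set $T(K_1,\ldots,K_j)$, if it is nonempty, is a cone of rank $j$ in $\mathbb{R}^n$.
   Context: A proper cone is a closed convex cone that is pointed and solid. $\wedge^j\mathbb{R}^n$ is the $j$th exterior power of $\mathbb{R}^n$. An exterior basic cone defined by a basis $e_1',\ldots,e_n'$ is a cone in $\wedge^j\mathbb{R}^n$ spanned (as nonnegative combinations) by vectors $\sigma_{i_1\ldots i_j}(e'_{i_1}\wedge\cdots\wedge e'_{i_j})$, $1\le i_1<\cdots<i_j\le n$, with each fixed sign $\sigma_{i_1\ldots i_j}\in\{\pm1\}$. Define recursively $T(K_1)=K_1\cup(-K_1)$, and for $j\ge2$, $T(K_1,\ldots,K_j)$ is the closure of the set of all $x_1\in\mathbb{R}^n$ for which there exist $x_2\in T(K_1)$, $x_3\in T(K_1,K_2),\ldots,x_j\in T(K_1,\ldots,K_{j-1})$ with $x_1\wedge\cdots\wedge x_j\in\operatorname{int}(K_j)\cup\operatorname{int}(-K_j)$. A closed set $T\subset\mathbb{R}^n$ is a cone of rank $k$ if $\alpha x\in T$ for all $x\in T,\alpha\in\mathbb{R}$, and $T$ contains at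 least one $k$-dimensional subspace and no subspace of higher dimension. *)

theory Defs
  imports "HOL-Analysis.Analysis"
begin

text \<open>
 Model: R^n is real^'n with 'n finite and linearly ordered (the order fixes the
 standard basis order e_1,...,e_n).  The exterior power of degree j is modelled in
 Pluecker coordinates w.r.t. the standard basis e_{i_1} wedge ... wedge e_{i_j}
 (i_1 < ... < i_j): as the linear subspace ext_space j of real^('n set) of
 vectors supported on the j-element subsets of 'n.
\<close>

definition ext_space :: "nat \<Rightarrow> (real ^ ('n::finite set)) set" where
  "ext_space j = {w. \<forall>I. card I \<noteq> j \<longrightarrow> w $ I = 0}"

text \<open>Wedge product of f 0, ..., f (j-1): coordinate at a j-subset I is the j x j minor
 of the rows of I (in increasing order), computed by the Leibniz formula.\<close>
definition wedge :: "nat \<Rightarrow> (nat \<Rightarrow> real ^ ('n::{finite,linorder})) \<Rightarrow> real ^ ('n set)" where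
  "wedge j f = (\<chi> I. if card I = j then
      (\<Sum>p\<in>{p. p permutes {0..<j}}.
          of_int (sign p) * (\<Prod>a\<in>{0..<j}. f a $ (sorted_list_of_set I ! p a)))
     else 0)"

definition int_in :: "'a::real_normed_vector set \<Rightarrow> 'a set \<Rightarrow> 'a set" where
  "int_in W K = {x \<in> K. \<exists>e>0. \<forall>y\<in>W. dist y x < e \<longrightarrow> y \<in> K}"

definition proper_cone_in :: "'a::real_normed_vector set \<Rightarrow> 'a set \<Rightarrow> bool" where
  "proper_cone_in W K \<longleftrightarrow> K \<subseteq> W \<and> closed K \<and> convex K \<and>
     (\<forall>x\<in>K. \<forall>c::real. c \<ge> 0 \<longrightarrow> c *\<^sub>R x \<in> K) \<and>
     K \<inter> uminus ` K = {0} \<and> int_in W K \<noteq> {}"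

definition ext_basic_cone ::
  "nat \<Rightarrow> ('n::{finite,linorder} \<Rightarrow> real ^ ('n::{finite,linorder})) \<Rightarrow> (('n::{finite,linorder}) set \<Rightarrow> real) \<Rightarrow> (real ^ (('n::{finite,linorder}) set)) set" where
  "ext_basic_cone j e' \<sigma> =
     {\<Sum>I\<in>{I. card I = j}. c I *\<^sub>R (\<sigma> I *\<^sub>R wedge j (\<lambda>a. e' (sorted_list_of_set I ! a))) | c.
        \<forall>I. c I \<ge> 0}"

definition is_ext_basic_cone :: "nat \<Rightarrow> (('n::{finite,linorder}) \<Rightarrow> real ^ ('n::{finite,linorder})) \<Rightarrow> (real ^ (('n::{finite,linorder}) set)) set \<Rightarrow> bool" where
  "is_ext_basic_cone j e' K' \<longleftrightarrow>
     (\<exists>\<sigma>. (\<forall>I. \<sigma> I = 1 \<or> \<sigma> I = -1) \<and> K' = ext_basic_cone j e' \<sigma>)"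

definition is_basis :: "('n::finite \<Rightarrow> real ^ 'n) \<Rightarrow> bool" where
  "is_basis e' \<longleftrightarrow> inj e' \<and> independent (range e') \<and> span (range e') = UNIV"

text \<open>T K1 K j = T(K_1,...,K_j) for j \<ge> 1 (K j = K_j for j \<ge> 2). In the wedge,
 f 0 = x_1 and f i = x_{i+1} \<in> T(K_1,...,K_i) for 1 \<le> i \<le> j-1.\<close>
fun T :: "(real ^ ('n::{finite,linorder})) set \<Rightarrow> (nat \<Rightarrow> (real ^ (('n::{finite,linorder}) set)) set) \<Rightarrow> nat \<Rightarrow> (real ^ ('n::{finite,linorder})) set" where
  "T K1 K 0 = {}"
| "T K1 K (Suc 0) = K1 \<union> uminus ` K1"
| "T K1 K (Suc (Suc m)) = closure {x. \<exists>f. f 0 = x \<and> (\<forall>i\<in>{1..Suc m}. f i \<in> T K1 K i) \<and>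
      wedge (Suc (Suc m)) f \<in> int_in (ext_space (Suc (Suc m))) (K (Suc (Suc m)))
                              \<union> int_in (ext_space (Suc (Suc m))) (uminus ` K (Suc (Suc m)))}"

definition cone_of_rank :: "(real ^ 'n::finite) set \<Rightarrow> nat \<Rightarrow> bool" where
  "cone_of_rank S k \<longleftrightarrow> closed S \<and> (\<forall>x\<in>S. \<forall>\<alpha>::real. \<alpha> *\<^sub>R x \<in> S) \<and>
     (\<exists>L. subspace L \<and> dim L = k \<and> L \<subseteq> S) \<and>
     (\<forall>L. subspace L \<and> L \<subseteq> S \<longrightarrow> dim L \<le> k)"

end

theory Submission
  imports Defs Jordan_Normal_Form.Determinant
begin

text \<open>
  For \<open>j \<ge> 2\<close>, \<open>T(K\<^sub>1, \<dots>, K\<^sub>j)\<close> is the closure of the set \<open>S\<close> of first factors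
  \<open>x\<^sub>1\<close> of wedges \<open>x\<^sub>1 \<and> \<dots> \<and> x\<^sub>j \<in> \<plusminus>int K\<^sub>j\<close> whose other factors satisfy a
  condition not involving \<open>x\<^sub>1\<close>. By multilinearity \<open>S\<close> is invariant under nonzero
  scalings, so its closure is a cone. The factors of a witness are independent, and each
  vector \<open>\<Sum> t\<^sub>k x\<^sub>k\<close> of their span with \<open>t\<^sub>1 \<noteq> 0\<close> lies in \<open>S\<close> again (replacing
  \<open>x\<^sub>1\<close> by it multiplies the wedge by \<open>t\<^sub>1\<close>); the others are limits of such vectors.
  So the closure contains a \<open>j\<close>-dimensional subspace.

  Conversely, let \<open>x \<in> S\<close> with witness \<open>w = x \<and> x\<^sub>2 \<and> \<dots> \<and> x\<^sub>j\<close>. As \<open>K\<^sub>j\<close> lies in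
  an exterior basic cone, \<open>w = \<plusminus>\<Sum>\<^sub>I \<gamma>\<^sub>I \<sigma>\<^sub>I e'\<^sub>I\<close> with all \<open>\<gamma>\<^sub>I > 0\<close>. For a
  \<open>(j + 1)\<close>-set \<open>J\<close>, the \<open>e'\<^sub>J\<close>-coordinate of \<open>x \<and> w = 0\<close> reads
  \<open>\<Sum>i\<in>J. \<gamma>(J - {i}) \<tau>\<^sub>i \<xi>\<^sub>i = 0\<close>, where \<open>\<xi>\<close> are the coordinates of \<open>x\<close> in the
  basis \<open>e'\<close> and the signs \<open>\<tau>\<^sub>i = \<plusminus>1\<close> do not depend on \<open>x\<close>. Hence the \<open>\<tau>\<^sub>i \<xi>\<^sub>i\<close>
  are never all positive or all negative. This closed condition passes to the closure,
  whereas a subspace of dimension \<open>j + 1\<close> contains a vector with \<open>\<xi>\<^sub>i = \<tau>\<^sub>i\<close> on a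
  suitable \<open>J\<close>.
\<close>

lemma nth_remove1_distinct:
  assumes "distinct xs" "k < length xs" "r < length xs - 1"
  shows "remove1 (xs ! k) xs ! r = xs ! (if r < k then r else Suc r)"
proof -
  have xs: "xs = take k xs @ xs ! k # drop (Suc k) xs"
    using assms(2) by (simp add: id_take_nth_drop)
  have "xs ! k \<notin> set (take k xs)"
    using assms(1,2) by (subst (asm) xs) auto
  then have "remove1 (xs ! k) xs = take k xs @ drop (Suc k) xs"
    by (subst xs) (simp add: remove1_append)
  then show ?thesis using assms(2,3) by (auto simp: nth_append min_def)
qed

lemma inj_on_factors_through_sorted_list:
  fixes \<phi> :: "nat \<Rightarrow> 'a::linorder"
  assumes inj: "inj_on \<phi> {0..<m}"
  obtains p where "p permutes {0..<m}" "\<And>a. a < m \<Longrightarrow> sorted_list_of_set (\<phi> ` {0..<m}) ! p a = \<phi> a"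
proof -
  let ?s = "sorted_list_of_set (\<phi> ` {0..<m})"
  have "distinct ?s" "{0..<m} = {..<length ?s}" "\<phi> ` {0..<m} = set ?s"
    using inj by (simp_all add: card_image atLeast0LessThan)
  then have bij_s: "bij_betw ((!) ?s) {0..<m} (\<phi> ` {0..<m})"
    by (rule bij_betw_nth)
  define p where "p a = (if a < m then the_inv_into {0..<m} ((!) ?s) (\<phi> a) else a)" for a
  have "bij_betw (the_inv_into {0..<m} ((!) ?s) \<circ> \<phi>) {0..<m} {0..<m}"
    by (rule bij_betw_trans[OF inj_on_imp_bij_betw[OF inj] bij_betw_the_inv_into[OF bij_s]])
  moreover have "bij_betw p {0..<m} {0..<m} \<longleftrightarrow> bij_betw (the_inv_into {0..<m} ((!) ?s) \<circ> \<phi>) {0..<m} {0..<m}"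
    by (rule bij_betw_cong) (simp add: p_def)
  ultimately have "bij_betw p {0..<m} {0..<m}" by blast
  then have "p permutes {0..<m}" by (rule bij_imp_permutes) (simp add: p_def)
  moreover have "?s ! p a = \<phi> a" if "a < m" for a
    using that f_the_inv_into_f_bij_betw[OF bij_s, of "\<phi> a"] by (simp add: p_def)
  ultimately show thesis using that by blast
qed

section \<open>Wedge products as determinants\<close>

lemma wedge_nth_eq_det:
  "wedge j (f :: nat \<Rightarrow> real^'n::{finite,linorder}) $ I =
     (if card I = j then Determinant.det (Matrix.mat j j (\<lambda>(a, r). f a $ (sorted_list_of_set I ! r))) else 0)"
  unfolding wedge_def Determinant.det_def by simp

lemma wedge_cong:
  fixes f g :: "nat \<Rightarrow> real^'n::{finite,linorder}"
  assumes "\<And>a. a < j \<Longrightarrow> f a = g a"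
  shows "wedge j f = wedge j g"
  unfolding wedge_def using assms by (auto intro!: sum.cong prod.cong simp: Finite_Cartesian_Product.vec_eq_iff)

lemma wedge_eq_zero_if_repeated:
  fixes f :: "nat \<Rightarrow> real^'n::{finite,linorder}"
  assumes "a < j" "b < j" "a \<noteq> b" "f a = f b"
  shows "wedge j f = 0"
proof -
  have "Determinant.det (Matrix.mat j j (\<lambda>(a, r). f a $ (sorted_list_of_set I ! r))) = 0" for I
    by (rule det_identical_rows[of _ j a b]) (use assms in \<open>auto simp: Matrix.row_def\<close>)
  then show ?thesis by (simp add: Finite_Cartesian_Product.vec_eq_iff wedge_nth_eq_det)
qed

lemma wedge_permute_factors:
  fixes f :: "nat \<Rightarrow> real^'n::{finite,linorder}"
  assumes p: "p permutes {0..<j}"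
  shows "wedge j (f \<circ> p) = of_int (sign p) *\<^sub>R wedge j f"
proof -
  have "wedge j (f \<circ> p) $ I = of_int (sign p) * wedge j f $ I" for I
  proof -
    define A where "A = Matrix.mat j j (\<lambda>(a, r). f a $ (sorted_list_of_set I ! r))"
    have "Matrix.mat j j (\<lambda>(i, r). A $$ (p i, r)) = Matrix.mat j j (\<lambda>(a, r). (f \<circ> p) a $ (sorted_list_of_set I ! r))"
      using permutes_in_image[OF p] by (intro eq_matI) (auto simp: A_def)
    moreover have "Determinant.det (Matrix.mat j j (\<lambda>(i, r). A $$ (p i, r))) = of_int (sign p) * Determinant.det A"
      by (rule det_permute_rows[OF _ p]) (simp add: A_def)
    ultimately show ?thesis by (simp add: wedge_nth_eq_det A_def)
  qed
  then show ?thesis by (simp add: Finite_Cartesian_Product.vec_eq_iff)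
qed

lemma wedge_nth_fun_upd:
  fixes f :: "nat \<Rightarrow> real^'n::{finite,linorder}"
  assumes "k < j"
  shows "wedge j (f(k := x)) $ I = (if card I = j then (\<Sum>p\<in>{p. p permutes {0..<j}}.
      of_int (sign p) * (x $ (sorted_list_of_set I ! p k) *
        (\<Prod>a\<in>{0..<j} - {k}. f a $ (sorted_list_of_set I ! p a)))) else 0)"
proof -
  have "(\<Prod>a\<in>{0..<j}. (f(k := x)) a $ g a) = x $ g k * (\<Prod>a\<in>{0..<j} - {k}. f a $ g a)" for g
    using assms by (subst prod.remove[of _ k]) (auto intro!: prod.cong)
  then show ?thesis by (simp add: wedge_def)
qed

lemma wedge_linear_factor:
  fixes f :: "nat \<Rightarrow> real^'n::{finite,linorder}"
  assumes "k < j"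
  shows "linear (\<lambda>x. wedge j (f(k := x)))"
  by (rule linearI)
    (simp_all add: Finite_Cartesian_Product.vec_eq_iff wedge_nth_fun_upd[OF assms] sum.distrib[symmetric]
      sum_distrib_left algebra_simps)

lemma wedge_fun_upd_lincomb:
  fixes f :: "nat \<Rightarrow> real^'n::{finite,linorder}"
  assumes "k < j"
  shows "wedge j (f(k := (\<Sum>i<j. t i *\<^sub>R f i))) = t k *\<^sub>R wedge j f"
proof -
  have lin: "linear (\<lambda>x. wedge j (f(k := x)))" by (rule wedge_linear_factor[OF assms])
  have "wedge j (f(k := (\<Sum>i<j. t i *\<^sub>R f i))) = (\<Sum>i<j. t i *\<^sub>R wedge j (f(k := f i)))"
    using linear_sum[OF lin, of "\<lambda>i. t i *\<^sub>R f i" "{..<j}"] linear_scale[OF lin] by simp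
  also have "\<dots> = (\<Sum>i<j. if i = k then t i *\<^sub>R wedge j f else 0)"
    by (intro sum.cong refl) (auto intro: wedge_eq_zero_if_repeated[of k j] simp: assms)
  also have "\<dots> = t k *\<^sub>R wedge j f" using assms by simp
  finally show ?thesis .
qed

lemma independent_if_wedge_nonzero:
  fixes f :: "nat \<Rightarrow> real^'n::{finite,linorder}"
  assumes w: "wedge j f \<noteq> 0"
  shows "inj_on f {..<j}" and "independent (f ` {..<j})"
proof -
  show inj: "inj_on f {..<j}"
    using w wedge_eq_zero_if_repeated[of _ j _ f] by (auto intro: inj_onI)
  show "independent (f ` {..<j})"
  proof
    assume "dependent (f ` {..<j})"
    then obtain u where u: "\<exists>v\<in>f ` {..<j}. u v \<noteq> 0" "(\<Sum>v\<in>f ` {..<j}. u v *\<^sub>R v) = 0"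
      by (auto simp: dependent_finite)
    then obtain k where k: "k < j" "u (f k) \<noteq> 0" by auto
    have "(\<Sum>i<j. u (f i) *\<^sub>R f i) = 0"
      using u(2) by (simp add: sum.reindex[OF inj])
    then have "u (f k) *\<^sub>R wedge j f = wedge j (f(k := 0))"
      using wedge_fun_upd_lincomb[OF k(1), where t = "u \<circ> f" and f = f] by simp
    also have "\<dots> = 0"
      using linear_0[OF wedge_linear_factor[OF k(1), of f]] by simp
    finally show False using k(2) w by simp
  qed
qed

lemma wedge_Suc_laplace:
  fixes g :: "nat \<Rightarrow> real^'n::{finite,linorder}"
  assumes J: "card J = Suc j"
  shows "wedge (Suc j) g $ J = (\<Sum>k<Suc j. (-1)^k * g 0 $ (sorted_list_of_set J ! k) *
      wedge j (\<lambda>a. g (Suc a)) $ (J - {sorted_list_of_set J ! k}))"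
proof -
  let ?s = "sorted_list_of_set J"
  define A where "A = Matrix.mat (Suc j) (Suc j) (\<lambda>(a, r). g a $ (?s ! r))"
  have fin: "finite J" using J card.infinite by fastforce
  have "Determinant.det A = (\<Sum>k<Suc j. A $$ (0, k) * cofactor A 0 k)"
    by (rule laplace_expansion_row) (simp_all add: A_def)
  also have "\<dots> = (\<Sum>k<Suc j. (-1)^k * g 0 $ (?s ! k) * wedge j (\<lambda>a. g (Suc a)) $ (J - {?s ! k}))"
  proof (rule sum.cong[OF refl])
    fix k assume k: "k \<in> {..<Suc j}"
    have "?s ! k \<in> J" using k J fin by (metis lessThan_iff length_sorted_list_of_set nth_mem set_sorted_list_of_set)
    then have ck: "card (J - {?s ! k}) = j" using J fin by simp
    have "sorted_list_of_set (J - {?s ! k}) ! r = ?s ! (if r < k then r else Suc r)" if "r < j" for r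
      using that k J fin by (simp add: sorted_list_of_set_remove nth_remove1_distinct)
    then have "mat_delete A 0 k = Matrix.mat j j (\<lambda>(a, r). g (Suc a) $ (sorted_list_of_set (J - {?s ! k}) ! r))"
      using k by (intro eq_matI) (auto simp: mat_delete_def A_def)
    then show "A $$ (0, k) * cofactor A 0 k =
        (-1)^k * g 0 $ (?s ! k) * wedge j (\<lambda>a. g (Suc a)) $ (J - {?s ! k})"
      using k ck by (simp add: cofactor_def wedge_nth_eq_det A_def)
  qed
  finally show ?thesis using J by (simp add: wedge_nth_eq_det A_def)
qed

text \<open>The exterior product \<open>y \<and> w\<close> of a vector and a \<open>j\<close>-vector, written as the Laplace expansion
  along the first factor.\<close>
definition ext_mul :: "nat \<Rightarrow> real^'n::{finite,linorder} \<Rightarrow> real^('n set) \<Rightarrow> real^('n set)" where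
  "ext_mul j y w = (\<chi> J. if card J = Suc j then (\<Sum>k<Suc j. (-1)^k * y $ (sorted_list_of_set J ! k) *
       w $ (J - {sorted_list_of_set J ! k})) else 0)"

lemma ext_mul_linear_left: "linear (\<lambda>y. ext_mul j y w)"
  by (rule linearI) (simp_all add: ext_mul_def Finite_Cartesian_Product.vec_eq_iff
      sum.distrib[symmetric] sum_distrib_left algebra_simps)

lemma ext_mul_linear_right: "linear (ext_mul j y)"
  by (rule linearI) (simp_all add: ext_mul_def Finite_Cartesian_Product.vec_eq_iff
      sum.distrib[symmetric] sum_distrib_left algebra_simps)

lemma ext_mul_wedge:
  "ext_mul j y (wedge j g) = wedge (Suc j) (\<lambda>a. if a = 0 then y else g (a - 1))"
proof -
  have "ext_mul j y (wedge j g) $ J = wedge (Suc j) (\<lambda>a. if a = 0 then y else g (a - 1)) $ J" for J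
    using wedge_Suc_laplace[of J j "\<lambda>a. if a = 0 then y else g (a - 1)"]
    by (cases "card J = Suc j") (simp_all add: ext_mul_def wedge_def)
  then show ?thesis by (simp add: Finite_Cartesian_Product.vec_eq_iff)
qed

section \<open>Basic wedges of a basis\<close>

definition basic_wedge ::
  "nat \<Rightarrow> ('n::{finite,linorder} \<Rightarrow> real^'n::{finite,linorder}) \<Rightarrow> 'n set \<Rightarrow> real^('n set)" where
  "basic_wedge j e' I = wedge j (\<lambda>a. e' (sorted_list_of_set I ! a))"

lemma wedge_comp_inj_eq_basic_wedge:
  fixes e' :: "'n::{finite,linorder} \<Rightarrow> real^'n::{finite,linorder}"
  assumes "inj_on \<phi> {0..<m}"
  shows "wedge m (e' \<circ> \<phi>) = basic_wedge m e' (\<phi> ` {0..<m}) \<or>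
         wedge m (e' \<circ> \<phi>) = - basic_wedge m e' (\<phi> ` {0..<m})"
proof -
  obtain p where p: "p permutes {0..<m}" "\<And>a. a < m \<Longrightarrow> sorted_list_of_set (\<phi> ` {0..<m}) ! p a = \<phi> a"
    using inj_on_factors_through_sorted_list[OF assms] by blast
  have "wedge m (e' \<circ> \<phi>) = wedge m ((\<lambda>a. e' (sorted_list_of_set (\<phi> ` {0..<m}) ! a)) \<circ> p)"
    by (rule wedge_cong) (simp add: p(2))
  also have "\<dots> = of_int (sign p) *\<^sub>R basic_wedge m e' (\<phi> ` {0..<m})"
    unfolding basic_wedge_def by (rule wedge_permute_factors[OF p(1)])
  finally show ?thesis by (auto simp: sign_def)
qed

lemma basic_wedge_axis:
  assumes I: "card (I :: 'n::{finite,linorder} set) = m"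
  shows "basic_wedge m (\<lambda>i. axis i 1) I = axis I 1"
proof -
  let ?s = "\<lambda>I. sorted_list_of_set I"
  have "basic_wedge m (\<lambda>i. axis i 1) I $ I' = axis I 1 $ I'" if I': "card I' = m" for I'
  proof (cases "I' = I")
    case True
    have "Matrix.mat m m (\<lambda>(a, r). axis (?s I ! a) (1::real) $ (?s I ! r)) = 1\<^sub>m m"
      using I by (intro eq_matI) (auto simp: axis_def nth_eq_iff_index_eq)
    then show ?thesis using True I by (simp add: basic_wedge_def wedge_nth_eq_det)
  next
    case False
    have "\<not> I \<subseteq> I'" using card_subset_eq[of I' I] False I I' by auto
    then obtain x where x: "x \<in> I" "x \<notin> I'" by blast
    then have "x \<in> set (?s I)" by simp
    then obtain a where "a < length (?s I)" "?s I ! a = x" by (meson in_set_conv_nth)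
    then have a: "a < m" "?s I ! a = x" using I by simp_all
    have zero: "(\<Prod>b\<in>{0..<m}. axis (?s I ! b) (1::real) $ (?s I' ! p b)) = 0"
      if p: "p permutes {0..<m}" for p
    proof -
      have "p a < length (?s I')" using permutes_in_image[OF p, of a] a I' by simp
      then have "?s I' ! p a \<in> set (?s I')" by (rule nth_mem)
      then show ?thesis using a x by (intro prod_zero bexI[of _ a]) (auto simp: axis_def)
    qed
    have "basic_wedge m (\<lambda>i. axis i 1) I $ I' = 0"
      using I' by (simp add: basic_wedge_def wedge_def zero)
    then show ?thesis using False by (simp add: axis_def)
  qed
  moreover have "basic_wedge m (\<lambda>i. axis i 1) I $ I' = axis I 1 $ I'" if "card I' \<noteq> m" for I'
    using that I by (auto simp: basic_wedge_def wedge_def axis_def)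
  ultimately have "basic_wedge m (\<lambda>i. axis i 1) I $ I' = axis I 1 $ I'" for I'
    by (cases "card I' = m") simp_all
  then show ?thesis by (simp add: Finite_Cartesian_Product.vec_eq_iff)
qed

lemma wedge_of_basis_vectors_in_span:
  fixes e' :: "'n::{finite,linorder} \<Rightarrow> real^'n::{finite,linorder}"
  assumes "\<And>a. a < m \<Longrightarrow> g a \<in> range e'"
  shows "wedge m g \<in> span (basic_wedge m e' ` {I. card I = m})"
proof -
  define \<phi> where "\<phi> a = inv_into UNIV e' (g a)" for a
  have \<phi>: "g a = e' (\<phi> a)" if "a < m" for a
    using assms that by (simp add: \<phi>_def f_inv_into_f)
  have w: "wedge m g = wedge m (e' \<circ> \<phi>)" by (rule wedge_cong) (simp add: \<phi>)
  show ?thesis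
  proof (cases "inj_on \<phi> {0..<m}")
    case True
    then have "basic_wedge m e' (\<phi> ` {0..<m}) \<in> span (basic_wedge m e' ` {I. card I = m})"
      by (intro span_base) (simp add: card_image)
    then show ?thesis using wedge_comp_inj_eq_basic_wedge[OF True, of e'] w
      by (auto intro: span_neg)
  next
    case False
    then obtain a b where "a < m" "b < m" "a \<noteq> b" "\<phi> a = \<phi> b" by (auto simp: inj_on_def)
    then have "wedge m g = 0" using \<phi> by (intro wedge_eq_zero_if_repeated[of a m b]) auto
    then show ?thesis by (simp add: span_zero)
  qed
qed

lemma wedge_in_span_basic_wedges:
  fixes e' :: "'n::{finite,linorder} \<Rightarrow> real^'n::{finite,linorder}"
  assumes "span (range e') = UNIV"
  shows "wedge m g \<in> span (basic_wedge m e' ` {I. card I = m})"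
proof -
  let ?E = "basic_wedge m e' ` {I. card I = m}"
  have "wedge m g \<in> span ?E" if "\<forall>a. k \<le> a \<longrightarrow> a < m \<longrightarrow> g a \<in> range e'" for k g
    using that
  proof (induction k arbitrary: g)
    case 0
    then show ?case by (intro wedge_of_basis_vectors_in_span) auto
  next
    case (Suc k)
    show ?case
    proof (cases "k < m")
      case False
      then show ?thesis by (intro Suc.IH) auto
    next
      case True
      have lin: "linear (\<lambda>x. wedge m (g(k := x)))" by (rule wedge_linear_factor[OF True])
      have "g k \<in> span (range e')" using assms by simp
      then obtain u where u: "(\<Sum>v\<in>range e'. u v *\<^sub>R v) = g k" using span_finite[of "range e'"] by auto
      have "wedge m g = wedge m (g(k := \<Sum>v\<in>range e'. u v *\<^sub>R v))" by (simp add: u)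
      also have "\<dots> = (\<Sum>v\<in>range e'. u v *\<^sub>R wedge m (g(k := v)))"
        using linear_sum[OF lin, of "\<lambda>v. u v *\<^sub>R v" "range e'"] linear_scale[OF lin] by simp
      also have "\<dots> \<in> span ?E"
        using Suc by (intro span_sum span_scale) (auto simp: le_Suc_eq)
      finally show ?thesis .
    qed
  qed
  from this[of m g] show ?thesis by simp
qed

text \<open>The \<open>C(n, m)\<close> basic wedges span a space containing all standard basis vectors of
  \<open>ext_space m\<close>, hence they are independent by counting.\<close>
lemma basic_wedges_independent:
  fixes e' :: "'n::{finite,linorder} \<Rightarrow> real^'n::{finite,linorder}"
  assumes "span (range e') = UNIV"
  shows "inj_on (basic_wedge m e') {I. card I = m}" and "independent (basic_wedge m e' ` {I. card I = m})"
proof -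
  let ?M = "{I::'n set. card I = m}"
  let ?E = "basic_wedge m e' ` ?M"
  let ?D = "(\<lambda>I. axis I (1::real)) ` ?M"
  have "?D \<subseteq> span ?E"
  proof
    fix x assume "x \<in> ?D"
    then obtain I where "card I = m" "x = axis I 1" by blast
    then have "x = wedge m (\<lambda>a. axis (sorted_list_of_set I ! a) 1)"
      using basic_wedge_axis[of I m] unfolding basic_wedge_def by simp
    then show "x \<in> span ?E" using wedge_in_span_basic_wedges[OF assms] by simp
  qed
  moreover have "independent ?D"
    by (rule independent_mono[OF independent_Basis]) (auto simp: Basis_vec_def)
  ultimately have "card ?D \<le> dim ?E" using independent_card_le_dim[of ?D "span ?E"] by (simp add: dim_span)
  moreover have "card ?D = card ?M" by (rule card_image) (auto simp: inj_on_def axis_eq_axis)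
  moreover have "dim ?E \<le> card ?E" by (rule dim_le_card) (auto intro: span_base)
  moreover have "card ?E \<le> card ?M" by (rule card_image_le) simp
  ultimately have E: "card ?E = card ?M" "card ?E = dim ?E" by linarith+
  show "independent ?E" by (subst card_eq_dim[of ?E ?E]) (auto simp: E(2) intro: span_base)
  show "inj_on (basic_wedge m e') ?M" by (rule eq_card_imp_inj_on) (simp_all add: E)
qed

lemma basic_wedge_coordinate_functional:
  fixes e' :: "'n::{finite,linorder} \<Rightarrow> real^'n::{finite,linorder}"
  assumes "span (range e') = UNIV" "card J = m"
  obtains \<phi> :: "real^('n set) \<Rightarrow> real" where "linear \<phi>" "\<phi> (basic_wedge m e' J) = 1"
    "\<And>I. card I = m \<Longrightarrow> I \<noteq> J \<Longrightarrow> \<phi> (basic_wedge m e' I) = 0"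
proof -
  note inj = basic_wedges_independent(1)[OF assms(1), of m]
  obtain \<phi> :: "real^('n set) \<Rightarrow> real" where \<phi>: "linear \<phi>"
    "\<forall>x\<in>basic_wedge m e' ` {I. card I = m}. \<phi> x = (if x = basic_wedge m e' J then 1 else 0)"
    using linear_independent_extend[OF basic_wedges_independent(2)[OF assms(1), of m],
        of "\<lambda>x. if x = basic_wedge m e' J then 1 else 0"] by blast
  have "\<phi> (basic_wedge m e' I) = 0" if "card I = m" "I \<noteq> J" for I
    using \<phi>(2) that assms(2) inj_onD[OF inj, of I J] by auto
  then show thesis using that \<phi> assms(2) by auto
qed

lemma ext_mul_basic_wedge:
  fixes e' :: "'n::{finite,linorder} \<Rightarrow> real^'n::{finite,linorder}"
  assumes I: "card I = j"
  shows "i \<in> I \<Longrightarrow> ext_mul j (e' i) (basic_wedge j e' I) = 0"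
    and "i \<notin> I \<Longrightarrow>
      \<exists>s\<in>{-1, 1}. ext_mul j (e' i) (basic_wedge j e' I) = s *\<^sub>R basic_wedge (Suc j) e' (insert i I)"
proof -
  let ?xs = "i # sorted_list_of_set I"
  have len: "length ?xs = Suc j" using I by simp
  have eq: "ext_mul j (e' i) (basic_wedge j e' I) = wedge (Suc j) (e' \<circ> (!) ?xs)"
    unfolding basic_wedge_def ext_mul_wedge by (rule wedge_cong) (simp add: nth_Cons')
  show "ext_mul j (e' i) (basic_wedge j e' I) = 0" if "i \<in> I"
  proof -
    have "\<not> distinct ?xs" using that I by (simp add: card_ge_0_finite)
    then obtain a b where "a < Suc j" "b < Suc j" "a \<noteq> b" "?xs ! a = ?xs ! b"
      using len by (auto simp: distinct_conv_nth)
    then show ?thesis unfolding eq by (intro wedge_eq_zero_if_repeated[of a "Suc j" b]) auto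
  qed
  assume "i \<notin> I"
  then have "inj_on ((!) ?xs) {0..<Suc j}" using I len by (intro inj_on_nth) (auto simp: card_ge_0_finite)
  moreover have "(!) ?xs ` {0..<Suc j} = insert i I"
    using nth_image[of "Suc j" ?xs] len I by (simp add: card_ge_0_finite)
  ultimately show "\<exists>s\<in>{-1, 1}. ext_mul j (e' i) (basic_wedge j e' I) = s *\<^sub>R basic_wedge (Suc j) e' (insert i I)"
    unfolding eq using wedge_comp_inj_eq_basic_wedge[of "(!) ?xs" "Suc j" e'] by force
qed

lemma coordinate_ext_mul_basic_wedges:
  fixes e' :: "'n::{finite,linorder} \<Rightarrow> real^'n::{finite,linorder}" and \<phi> :: "real^('n set) \<Rightarrow> real"
  assumes J: "card J = Suc j" and lin: "linear \<phi>" and \<phi>J: "\<phi> (basic_wedge (Suc j) e' J) = 1"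
    and \<phi>I: "\<And>I. card I = Suc j \<Longrightarrow> I \<noteq> J \<Longrightarrow> \<phi> (basic_wedge (Suc j) e' I) = 0"
    and s: "\<And>i. i \<in> J \<Longrightarrow> ext_mul j (e' i) (basic_wedge j e' (J - {i})) = s i *\<^sub>R basic_wedge (Suc j) e' J"
  shows "\<phi> (ext_mul j (\<Sum>i\<in>UNIV. a i *\<^sub>R e' i) (\<Sum>I\<in>{I. card I = j}. c I *\<^sub>R basic_wedge j e' I)) =
    (\<Sum>i\<in>J. a i * c (J - {i}) * s i)"
proof -
  let ?M = "{I::'n set. card I = j}"
  have coord: "\<phi> (ext_mul j (e' i) (basic_wedge j e' I)) = (if i \<in> J \<and> I = J - {i} then s i else 0)"
    if I: "card I = j" for i I
  proof (cases "i \<in> I")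
    case True
    then show ?thesis using ext_mul_basic_wedge(1)[OF I True] linear_0[OF lin] by auto
  next
    case False
    show ?thesis
    proof (cases "insert i I = J")
      case True
      then have "i \<in> J" "I = J - {i}" using False by auto
      then show ?thesis using s[of i] \<phi>J linear_scale[OF lin] by simp
    next
      case ne: False
      obtain \<epsilon> where "ext_mul j (e' i) (basic_wedge j e' I) = \<epsilon> *\<^sub>R basic_wedge (Suc j) e' (insert i I)"
        using ext_mul_basic_wedge(2)[OF I False] by blast
      moreover have "\<phi> (basic_wedge (Suc j) e' (insert i I)) = 0"
        using \<phi>I[OF _ ne] I False by (simp add: card_ge_0_finite)
      ultimately show ?thesis using ne linear_scale[OF lin] by auto
    qed
  qed
  have "ext_mul j (\<Sum>i\<in>UNIV. a i *\<^sub>R e' i) (\<Sum>I\<in>?M. c I *\<^sub>R basic_wedge j e' I) =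
      (\<Sum>i\<in>UNIV. \<Sum>I\<in>?M. (a i * c I) *\<^sub>R ext_mul j (e' i) (basic_wedge j e' I))"
    by (simp add: linear_sum[OF ext_mul_linear_left] linear_scale[OF ext_mul_linear_left]
        linear_sum[OF ext_mul_linear_right] linear_scale[OF ext_mul_linear_right] scaleR_sum_right)
      (subst sum.swap, simp add: mult.commute)
  then have "\<phi> (ext_mul j (\<Sum>i\<in>UNIV. a i *\<^sub>R e' i) (\<Sum>I\<in>?M. c I *\<^sub>R basic_wedge j e' I)) =
      (\<Sum>i\<in>UNIV. \<Sum>I\<in>?M. a i * c I * (if i \<in> J \<and> I = J - {i} then s i else 0))"
    by (simp add: linear_sum[OF lin] linear_scale[OF lin] coord)
  also have "\<dots> = (\<Sum>i\<in>UNIV. if i \<in> J then a i * c (J - {i}) * s i else 0)"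
    using J by (intro sum.cong refl) (auto simp: if_distrib[of "(*) _"] sum.delta' card_ge_0_finite cong: if_cong)
  also have "\<dots> = (\<Sum>i\<in>J. a i * c (J - {i}) * s i)"
    by (simp add: sum.If_cases)
  finally show ?thesis .
qed

section \<open>Relative interiors of cones\<close>

lemma subspace_ext_space: "subspace (ext_space j :: (real^('n::finite set)) set)"
  unfolding subspace_def ext_space_def by auto

lemma int_in_scaleR:
  fixes K :: "'a::real_normed_vector set"
  assumes W: "subspace W" and K: "\<And>x c. x \<in> K \<Longrightarrow> 0 \<le> c \<Longrightarrow> c *\<^sub>R x \<in> K"
    and w: "w \<in> int_in W K" and c: "c > 0"
  shows "c *\<^sub>R w \<in> int_in W K"
proof -
  obtain e where e: "e > 0" "\<And>y. y \<in> W \<Longrightarrow> dist y w < e \<Longrightarrow> y \<in> K" and "w \<in> K"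
    using w unfolding int_in_def by blast
  have "y \<in> K" if y: "y \<in> W" "dist y (c *\<^sub>R w) < c * e" for y
  proof -
    have "(1/c) *\<^sub>R y - w = (1/c) *\<^sub>R (y - c *\<^sub>R w)" using c by (simp add: scaleR_diff_right)
    then have "dist ((1/c) *\<^sub>R y) w = (1/c) * dist y (c *\<^sub>R w)" using c by (simp add: dist_norm)
    also have "\<dots> < e" using y c by (simp add: field_simps)
    finally have "(1/c) *\<^sub>R y \<in> K" using e(2) y W by (simp add: subspace_scale)
    then show "y \<in> K" using K[of "(1/c) *\<^sub>R y" c] c by simp
  qed
  then show ?thesis using \<open>w \<in> K\<close> K c e(1) unfolding int_in_def by (auto intro!: exI[of _ "c * e"])
qed

lemma int_in_uminus:
  fixes K :: "'a::real_normed_vector set"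
  assumes W: "subspace W" and w: "w \<in> int_in W K"
  shows "- w \<in> int_in W (uminus ` K)"
proof -
  obtain e where e: "e > 0" "\<And>y. y \<in> W \<Longrightarrow> dist y w < e \<Longrightarrow> y \<in> K" and "w \<in> K"
    using w unfolding int_in_def by blast
  have "y \<in> uminus ` K" if "y \<in> W" "dist y (- w) < e" for y
  proof -
    have "dist (- y) w = dist y (- w)" by (metis dist_minus minus_minus)
    then have "- y \<in> K" using e(2)[of "- y"] that W by (simp add: subspace_neg)
    then show ?thesis by (rule rev_image_eqI) simp
  qed
  then show ?thesis using \<open>w \<in> K\<close> e(1) unfolding int_in_def by auto
qed

lemma int_in_uminus_image:
  fixes K :: "'a::real_normed_vector set"
  assumes "subspace W"
  shows "int_in W (uminus ` K) = uminus ` int_in W K"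
proof
  show "uminus ` int_in W K \<subseteq> int_in W (uminus ` K)" using int_in_uminus[OF assms] by blast
  have "- w \<in> int_in W K" if "w \<in> int_in W (uminus ` K)" for w
    using int_in_uminus[OF assms that] by (simp add: image_image)
  then show "int_in W (uminus ` K) \<subseteq> uminus ` int_in W K" by force
qed

lemma int_in_pm_scaleR:
  fixes K :: "'a::real_normed_vector set"
  assumes W: "subspace W" and K: "\<And>x c. x \<in> K \<Longrightarrow> 0 \<le> c \<Longrightarrow> c *\<^sub>R x \<in> K"
    and w: "w \<in> int_in W K \<union> int_in W (uminus ` K)" and c: "c \<noteq> 0"
  shows "c *\<^sub>R w \<in> int_in W K \<union> int_in W (uminus ` K)"
proof -
  let ?P = "int_in W K \<union> uminus ` int_in W K"
  have pos: "d *\<^sub>R v \<in> ?P" if "v \<in> ?P" "d > 0" for v d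
    using that int_in_scaleR[OF W K, of _ d] by auto
  have neg: "- v \<in> ?P" if "v \<in> ?P" for v
    using that by auto
  have "w \<in> ?P" using w by (simp add: int_in_uminus_image[OF W])
  have "c *\<^sub>R w \<in> ?P"
  proof (cases "c > 0")
    case True
    then show ?thesis using pos[OF \<open>w \<in> ?P\<close>] by blast
  next
    case False
    then have "- c > 0" using c by simp
    then have "(- c) *\<^sub>R (- w) \<in> ?P" using pos neg[OF \<open>w \<in> ?P\<close>] by blast
    then show ?thesis by simp
  qed
  then show ?thesis by (simp add: int_in_uminus_image[OF W])
qed

lemma zero_notin_int_in:
  fixes K :: "'a::real_normed_vector set"
  assumes W: "subspace W" and K: "proper_cone_in W K" and v: "v \<in> W" "v \<noteq> 0"
  shows "0 \<notin> int_in W K \<union> int_in W (uminus ` K)"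
proof -
  have "0 \<notin> int_in W K"
  proof
    assume "0 \<in> int_in W K"
    then obtain e where e: "e > 0" "\<And>y. y \<in> W \<Longrightarrow> dist y 0 < e \<Longrightarrow> y \<in> K" unfolding int_in_def by blast
    define y where "y = (e / (2 * norm v)) *\<^sub>R v"
    have "norm y = e / 2" using v e by (simp add: y_def)
    moreover have "y \<in> W" using v W by (simp add: y_def subspace_scale)
    ultimately have "y \<in> K" "- y \<in> K" using e W by (auto simp: subspace_neg)
    then have "y \<in> K \<inter> uminus ` K" by (metis IntI image_eqI minus_minus)
    then have "y = 0" using K unfolding proper_cone_in_def by blast
    then show False using \<open>norm y = e / 2\<close> e(1) by simp
  qed
  then show ?thesis by (simp add: int_in_uminus_image[OF W] image_iff)
qed

lemma zero_notin_int_in_ext_space: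
  fixes K :: "(real^('n::finite set)) set"
  assumes "proper_cone_in (ext_space j) K" "j \<le> CARD('n)"
  shows "0 \<notin> int_in (ext_space j) K \<union> int_in (ext_space j) (uminus ` K)"
proof -
  obtain I :: "'n set" where "card I = j" using obtain_subset_with_card_n[of j "UNIV :: 'n set"] assms(2) by auto
  then have "axis I 1 \<in> ext_space j" by (simp add: ext_space_def axis_def)
  then show ?thesis using zero_notin_int_in[OF subspace_ext_space assms(1)] by (simp add: axis_eq_0_iff)
qed

text \<open>An interior point of a cone contained in an exterior basic cone has all its
  coefficients strictly positive: it stays in the cone after subtracting a small multiple
  of the sum of all generators.\<close>
lemma int_in_ext_basic_cone_coefficients:
  fixes e' :: "'n::{finite,linorder} \<Rightarrow> real^'n::{finite,linorder}"
  assumes K: "proper_cone_in (ext_space j) K" "K \<subseteq> ext_basic_cone j e' \<sigma>"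
    and w: "w \<in> int_in (ext_space j) K"
  obtains \<gamma> where "\<And>I. \<gamma> I > 0" "w = (\<Sum>I\<in>{I. card I = j}. (\<gamma> I * \<sigma> I) *\<^sub>R basic_wedge j e' I)"
proof -
  let ?M = "{I::'n set. card I = j}"
  define u where "u = (\<Sum>I\<in>?M. \<sigma> I *\<^sub>R basic_wedge j e' I)"
  have "u \<in> ext_space j" unfolding u_def
    by (intro subspace_sum[OF subspace_ext_space] subspace_scale[OF subspace_ext_space])
      (simp add: basic_wedge_def ext_space_def wedge_def)
  obtain e where e: "e > 0" "\<And>y. y \<in> ext_space j \<Longrightarrow> dist y w < e \<Longrightarrow> y \<in> K" and "w \<in> K"
    using w unfolding int_in_def by blast
  then have "w \<in> ext_space j" using K(1) by (auto simp: proper_cone_in_def)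
  define d where "d = e / (norm u + 1)"
  have pos: "norm u + 1 > 0" using norm_ge_zero[of u] by linarith
  have d: "d > 0" using e(1) pos by (simp add: d_def)
  have "d * norm u < d * (norm u + 1)" using d by simp
  also have "\<dots> = e" using pos by (simp add: d_def)
  finally have du: "d * norm u < e" .
  have "w - d *\<^sub>R u \<in> ext_space j"
    using \<open>w \<in> ext_space j\<close> \<open>u \<in> ext_space j\<close>
    by (intro subspace_diff[OF subspace_ext_space] subspace_scale[OF subspace_ext_space])
  moreover have "dist (w - d *\<^sub>R u) w < e" using d du by (simp add: dist_norm)
  ultimately have "w - d *\<^sub>R u \<in> ext_basic_cone j e' \<sigma>" using e(2) K(2) by blast
  then obtain c where c: "\<And>I. c I \<ge> 0"
    "w - d *\<^sub>R u = (\<Sum>I\<in>?M. c I *\<^sub>R (\<sigma> I *\<^sub>R basic_wedge j e' I))"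
    unfolding ext_basic_cone_def basic_wedge_def by blast
  have "w = (\<Sum>I\<in>?M. c I *\<^sub>R (\<sigma> I *\<^sub>R basic_wedge j e' I)) + d *\<^sub>R u"
    using c(2) by (simp add: algebra_simps)
  also have "\<dots> = (\<Sum>I\<in>?M. ((c I + d) * \<sigma> I) *\<^sub>R basic_wedge j e' I)"
    by (simp add: u_def scaleR_sum_right sum.distrib[symmetric] algebra_simps)
  finally show thesis using that[of "\<lambda>I. c I + d"] c(1) d(1) by (simp add: add_nonneg_pos)
qed

lemma int_in_pm_ext_basic_cone_coefficients:
  fixes e' :: "'n::{finite,linorder} \<Rightarrow> real^'n::{finite,linorder}"
  assumes K: "proper_cone_in (ext_space j) K" "K \<subseteq> ext_basic_cone j e' \<sigma>"
    and w: "w \<in> int_in (ext_space j) K \<union> int_in (ext_space j) (uminus ` K)"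
  obtains \<gamma> and \<epsilon> :: real where "\<And>I. \<gamma> I > 0" "\<epsilon> \<noteq> 0"
    "w = \<epsilon> *\<^sub>R (\<Sum>I\<in>{I. card I = j}. (\<gamma> I * \<sigma> I) *\<^sub>R basic_wedge j e' I)"
proof (cases "w \<in> int_in (ext_space j) K")
  case True
  then obtain \<gamma> where "\<And>I. \<gamma> I > 0" "w = (\<Sum>I\<in>{I. card I = j}. (\<gamma> I * \<sigma> I) *\<^sub>R basic_wedge j e' I)"
    using int_in_ext_basic_cone_coefficients[OF K] by blast
  then show thesis by (intro that[of \<gamma> 1]) simp_all
next
  case False
  then have "- w \<in> int_in (ext_space j) K"
    using w by (auto simp: int_in_uminus_image[OF subspace_ext_space])
  then obtain \<gamma> where "\<And>I. \<gamma> I > 0" "- w = (\<Sum>I\<in>{I. card I = j}. (\<gamma> I * \<sigma> I) *\<^sub>R basic_wedge j e' I)"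
    using int_in_ext_basic_cone_coefficients[OF K] by blast
  then show thesis by (intro that[of \<gamma> "-1"]) (simp_all add: minus_equation_iff[of w])
qed

section \<open>The rank of T\<close>

lemma basis_coordinates:
  fixes e' :: "'n::finite \<Rightarrow> real^'n"
  assumes "span (range e') = UNIV" "inj e'"
  obtains h :: "real^'n \<Rightarrow> real^'n" where "linear h" "inj h" "\<And>x. (\<Sum>i\<in>UNIV. h x $ i *\<^sub>R e' i) = x"
proof -
  define G where "G c = (\<Sum>i\<in>UNIV. c $ i *\<^sub>R e' i)" for c :: "real^'n"
  have lin: "linear G"
    by (rule linearI) (simp_all add: G_def scaleR_add_left sum.distrib scaleR_sum_right)
  have "x \<in> range G" for x
  proof -
    have "x \<in> span (range e')" using assms(1) by simp
    then obtain u where "x = (\<Sum>v\<in>range e'. u v *\<^sub>R v)" using span_finite[of "range e'"] by auto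
    also have "\<dots> = G (\<chi> i. u (e' i))" by (simp add: G_def sum.reindex[OF assms(2)])
    finally show ?thesis by simp
  qed
  then obtain h where h: "linear h" "G \<circ> h = id"
    using linear_surjective_right_inverse[OF lin] by blast
  then have hx: "G (h x) = x" for x by (metis comp_apply id_apply)
  then have "inj h" by (metis injI)
  then show thesis using that h(1) hx by (simp add: G_def)
qed

lemma subspace_coordinates_surjective:
  fixes M :: "(real^'n::finite) set"
  assumes "subspace M" "m \<le> dim M"
  shows "\<exists>J. card J = m \<and> (\<forall>t. \<exists>y\<in>M. \<forall>i\<in>J. y $ i = t i)"
  using assms
proof (induction m arbitrary: M)
  case 0
  then show ?case by (intro exI[of _ "{}"]) (auto intro: subspace_0)
next
  case (Suc m)
  then have "\<not> M \<subseteq> {0}" using dim_eq_0[of M] by linarith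
  then obtain y0 where y0: "y0 \<in> M" "y0 \<noteq> 0" by blast
  then obtain i0 where i0: "y0 $ i0 \<noteq> 0" by (metis Finite_Cartesian_Product.vec_eq_iff zero_index)
  define y1 where "y1 = (1 / y0 $ i0) *\<^sub>R y0"
  have y1: "y1 \<in> M" "y1 $ i0 = 1" using y0 i0 Suc.prems(1) by (auto simp: y1_def subspace_scale)
  define M' where "M' = {y\<in>M. y $ i0 = 0}"
  have subM': "subspace M'" using Suc.prems(1) unfolding M'_def subspace_def by auto
  have "M \<subseteq> span (insert y1 M')"
  proof
    fix y assume y: "y \<in> M"
    have "y - (y $ i0) *\<^sub>R y1 \<in> M'" using y y1 Suc.prems(1) by (auto simp: M'_def subspace_diff subspace_scale)
    then have "y - (y $ i0) *\<^sub>R y1 + (y $ i0) *\<^sub>R y1 \<in> span (insert y1 M')"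
      by (intro span_add span_scale) (auto intro: span_base)
    then show "y \<in> span (insert y1 M')" by simp
  qed
  then have "dim M \<le> dim M' + 1" using dim_subset[of M "span (insert y1 M')"] by (simp add: dim_span dim_insert split: if_splits)
  then obtain J' where J': "card J' = m" "\<forall>t. \<exists>y\<in>M'. \<forall>i\<in>J'. y $ i = t i"
    using Suc.IH[OF subM'] Suc.prems(2) by auto
  have "i0 \<notin> J'" using J'(2)[rule_format, of "\<lambda>_. 1"] by (auto simp: M'_def)
  show ?case
  proof (intro exI[of _ "insert i0 J'"] conjI allI)
    show "card (insert i0 J') = Suc m" using \<open>i0 \<notin> J'\<close> J'(1) by (simp add: card_ge_0_finite)
    fix t :: "'n \<Rightarrow> real"
    obtain y' where y': "y' \<in> M'" "\<forall>i\<in>J'. y' $ i = t i - t i0 * y1 $ i"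
      using J'(2)[rule_format, of "\<lambda>i. t i - t i0 * y1 $ i"] by blast
    have "t i0 *\<^sub>R y1 + y' \<in> M" using y1 y' Suc.prems(1) by (auto simp: M'_def subspace_add subspace_scale)
    moreover have "\<forall>i\<in>insert i0 J'. (t i0 *\<^sub>R y1 + y') $ i = t i" using y' y1 by (auto simp: M'_def)
    ultimately show "\<exists>y\<in>M. \<forall>i\<in>insert i0 J'. y $ i = t i" by blast
  qed
qed

lemma endpoint_in_closure:
  fixes g :: "real \<Rightarrow> 'a::topological_space"
  assumes "continuous_on UNIV g" "\<And>e. e > 0 \<Longrightarrow> g e \<in> S"
  shows "g 0 \<in> closure S"
proof -
  have "g ` closure {0<..} \<subseteq> closure S"
    using assms by (intro image_closure_subset) (auto intro: continuous_on_subset closure_subset[THEN subsetD])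
  then show ?thesis by auto
qed

lemma weighted_sum_eq_zero_imp_mixed_signs:
  fixes \<gamma> v :: "'a \<Rightarrow> real"
  assumes "finite J" "J \<noteq> {}" "\<And>i. i \<in> J \<Longrightarrow> \<gamma> i > 0" "(\<Sum>i\<in>J. \<gamma> i * v i) = 0"
  shows "\<not> (\<forall>i\<in>J. 0 < v i) \<and> \<not> (\<forall>i\<in>J. v i < 0)"
proof -
  have "0 < (\<Sum>i\<in>J. \<gamma> i * v i)" if "\<forall>i\<in>J. 0 < v i"
    using assms that by (intro sum_pos) auto
  moreover have "0 < (\<Sum>i\<in>J. \<gamma> i * - v i)" if "\<forall>i\<in>J. v i < 0"
    using assms that by (intro sum_pos) (auto simp: mult_pos_neg)
  ultimately show ?thesis using assms(4) by (auto simp: sum_negf)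
qed

lemma closed_mixed_signs:
  fixes g :: "'i \<Rightarrow> 'a::topological_space \<Rightarrow> real"
  assumes "finite J" "\<And>i. continuous_on UNIV (g i)"
  shows "closed {x. \<not> (\<forall>i\<in>J. 0 < g i x) \<and> \<not> (\<forall>i\<in>J. g i x < 0)}"
proof -
  have "{x. \<not> (\<forall>i\<in>J. 0 < g i x) \<and> \<not> (\<forall>i\<in>J. g i x < 0)} =
      (\<Union>i\<in>J. {x. g i x \<le> 0}) \<inter> (\<Union>i\<in>J. {x. 0 \<le> g i x})"
    by (auto simp: not_less)
  moreover have "closed {x. g i x \<le> 0}" "closed {x. 0 \<le> g i x}" for i
    by (intro closed_Collect_le assms continuous_intros)+
  ultimately show ?thesis using assms(1) by (simp add: closed_Int closed_UN)
qed

text \<open>The set inside the closure in the recursive definition of \<open>T\<close>, with the condition on the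
  later factors abstracted to \<open>Q\<close> and \<open>int K\<^sub>j \<union> int (-K\<^sub>j)\<close> to \<open>P\<close>.\<close>
definition wedge_first_factors ::
  "nat \<Rightarrow> ((nat \<Rightarrow> real^'n::{finite,linorder}) \<Rightarrow> bool) \<Rightarrow> (real^('n::{finite,linorder} set)) set \<Rightarrow>
    (real^'n::{finite,linorder}) set" where
  "wedge_first_factors j Q P = {x. \<exists>f. f 0 = x \<and> Q f \<and> wedge j f \<in> P}"

lemma wedge_first_factors_fun_upd:
  assumes "\<And>f y. Q (f(0 := y)) = Q f" "Q f" "wedge j f \<in> P" "wedge j (f(0 := x)) \<in> P"
  shows "x \<in> wedge_first_factors j Q P"
  using assms unfolding wedge_first_factors_def by (intro CollectI exI[of _ "f(0 := x)"]) simp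

lemma wedge_first_factors_scaleR:
  assumes Q: "\<And>f y. Q (f(0 := y)) = Q f" and P: "\<And>w c. w \<in> P \<Longrightarrow> c \<noteq> 0 \<Longrightarrow> c *\<^sub>R w \<in> P"
    and "1 \<le> j" and x: "x \<in> wedge_first_factors j Q P" and "c \<noteq> 0"
  shows "c *\<^sub>R x \<in> wedge_first_factors j Q P"
proof -
  obtain f where f: "f 0 = x" "Q f" "wedge j f \<in> P" using x by (auto simp: wedge_first_factors_def)
  have "wedge j (f(0 := c *\<^sub>R x)) = c *\<^sub>R wedge j (f(0 := x))"
    using linear_scale[OF wedge_linear_factor[of 0 j f]] \<open>1 \<le> j\<close> by simp
  also have "f(0 := x) = f" using f(1) by auto
  finally have w: "wedge j (f(0 := c *\<^sub>R x)) = c *\<^sub>R wedge j f" .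
  show ?thesis
    by (rule wedge_first_factors_fun_upd[OF Q f(2,3)]) (simp only: w P[OF f(3) \<open>c \<noteq> 0\<close>])
qed

lemma closure_wedge_first_factors_scaleR:
  assumes Q: "\<And>f y. Q (f(0 := y)) = Q f" and P: "\<And>w c. w \<in> P \<Longrightarrow> c \<noteq> 0 \<Longrightarrow> c *\<^sub>R w \<in> P"
    and "1 \<le> j" and x: "x \<in> closure (wedge_first_factors j Q P)"
  shows "\<alpha> *\<^sub>R x \<in> closure (wedge_first_factors j Q P)"
proof (cases "\<alpha> = 0")
  case False
  have "\<alpha> *\<^sub>R x \<in> (*\<^sub>R) \<alpha> ` closure (wedge_first_factors j Q P)" using x by blast
  also have "\<dots> = closure ((*\<^sub>R) \<alpha> ` wedge_first_factors j Q P)" by (rule closure_scaleR)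
  also have "\<dots> \<subseteq> closure (wedge_first_factors j Q P)"
    using wedge_first_factors_scaleR[OF Q P \<open>1 \<le> j\<close> _ False] by (intro closure_mono) auto
  finally show ?thesis .
next
  case True
  obtain s where "s \<in> wedge_first_factors j Q P" using x by fastforce
  then have "(\<lambda>e. e *\<^sub>R s) 0 \<in> closure (wedge_first_factors j Q P)"
    using wedge_first_factors_scaleR[OF Q P \<open>1 \<le> j\<close>]
    by (intro endpoint_in_closure continuous_intros) auto
  then show ?thesis using True by simp
qed

text \<open>A witness \<open>f\<close> spans a \<open>j\<close>-dimensional subspace of the closure: replacing \<open>f 0\<close> by
  \<open>\<Sum>k. t\<^sub>k f k\<close> multiplies the wedge by \<open>t\<^sub>0\<close>, and the points with \<open>t\<^sub>0 = 0\<close> are limits.\<close>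
lemma subspace_in_closure_wedge_first_factors:
  assumes Q: "\<And>f y. Q (f(0 := y)) = Q f" and P: "\<And>w c. w \<in> P \<Longrightarrow> c \<noteq> 0 \<Longrightarrow> c *\<^sub>R w \<in> P"
    and "0 \<notin> P" and "1 \<le> j" and ne: "wedge_first_factors j Q P \<noteq> {}"
  shows "\<exists>L. subspace L \<and> dim L = j \<and> L \<subseteq> closure (wedge_first_factors j Q P)"
proof -
  let ?S = "wedge_first_factors j Q P"
  obtain f where f: "Q f" "wedge j f \<in> P" using ne by (auto simp: wedge_first_factors_def)
  then have "wedge j f \<noteq> 0" using \<open>0 \<notin> P\<close> by auto
  note inj = independent_if_wedge_nonzero(1)[OF this] and indep = independent_if_wedge_nonzero(2)[OF this]
  have "span (f ` {..<j}) \<subseteq> closure ?S"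
  proof
    fix x assume "x \<in> span (f ` {..<j})"
    then obtain u where "x = (\<Sum>v\<in>f ` {..<j}. u v *\<^sub>R v)" using span_finite[of "f ` {..<j}"] by auto
    then have x: "x = (\<Sum>k<j. u (f k) *\<^sub>R f k)" by (simp add: sum.reindex[OF inj])
    have mem: "x + d *\<^sub>R f 0 \<in> ?S" if "u (f 0) + d \<noteq> 0" for d
    proof -
      define t where "t k = u (f k) + (if k = 0 then d else 0)" for k
      have "x + d *\<^sub>R f 0 = (\<Sum>k<j. t k *\<^sub>R f k)"
        using \<open>1 \<le> j\<close> by (simp add: x t_def scaleR_add_left sum.distrib if_distrib[of "\<lambda>c. c *\<^sub>R _"]
            cong: if_cong)
      then have "wedge j (f(0 := x + d *\<^sub>R f 0)) = t 0 *\<^sub>R wedge j f"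
        using wedge_fun_upd_lincomb[of 0 j f t] \<open>1 \<le> j\<close> by simp
      then show ?thesis using f P that by (intro wedge_first_factors_fun_upd[OF Q]) (auto simp: t_def)
    qed
    define \<sigma> :: real where "\<sigma> = (if u (f 0) < 0 then -1 else 1)"
    have "(\<lambda>e. x + (e * \<sigma>) *\<^sub>R f 0) 0 \<in> closure ?S"
      by (intro endpoint_in_closure continuous_intros mem) (auto simp: \<sigma>_def add_pos_nonneg)
    then show "x \<in> closure ?S" by simp
  qed
  moreover have "dim (span (f ` {..<j})) = j"
    using dim_eq_card_independent[OF indep] card_image[OF inj] by (simp add: dim_span)
  ultimately show ?thesis by (intro exI[of _ "span (f ` {..<j})"]) (auto simp: subspace_span)
qed

text \<open>Read off the \<open>J\<close>-coordinate of \<open>x \<and> (x \<and> x\<^sub>2 \<and> \<dots> \<and> x\<^sub>j) = 0\<close> in the basis \<open>e'\<close>.\<close>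
lemma wedge_first_factor_mixed_signs:
  fixes e' :: "'n::{finite,linorder} \<Rightarrow> real^'n::{finite,linorder}"
    and h :: "real^'n::{finite,linorder} \<Rightarrow> real^'n::{finite,linorder}"
  assumes e': "span (range e') = UNIV" and h: "\<And>x. (\<Sum>i\<in>UNIV. h x $ i *\<^sub>R e' i) = x"
    and K: "proper_cone_in (ext_space j) K" "K \<subseteq> ext_basic_cone j e' \<sigma>" and "1 \<le> j"
    and J: "card J = Suc j"
    and s: "\<And>i. i \<in> J \<Longrightarrow> ext_mul j (e' i) (basic_wedge j e' (J - {i})) = s i *\<^sub>R basic_wedge (Suc j) e' J"
    and f: "wedge j f \<in> int_in (ext_space j) K \<union> int_in (ext_space j) (uminus ` K)"
  shows "\<not> (\<forall>i\<in>J. 0 < \<sigma> (J - {i}) * s i * h (f 0) $ i) \<and> \<not> (\<forall>i\<in>J. \<sigma> (J - {i}) * s i * h (f 0) $ i < 0)"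
proof -
  let ?M = "{I::'n set. card I = j}"
  obtain \<phi> :: "real^('n set) \<Rightarrow> real" where \<phi>: "linear \<phi>" "\<phi> (basic_wedge (Suc j) e' J) = 1"
    "\<And>I. card I = Suc j \<Longrightarrow> I \<noteq> J \<Longrightarrow> \<phi> (basic_wedge (Suc j) e' I) = 0"
    using basic_wedge_coordinate_functional[OF e' J] by blast
  obtain \<gamma> and \<epsilon> :: real where \<gamma>: "\<And>I. \<gamma> I > 0" "\<epsilon> \<noteq> 0"
    "wedge j f = \<epsilon> *\<^sub>R (\<Sum>I\<in>?M. (\<gamma> I * \<sigma> I) *\<^sub>R basic_wedge j e' I)"
    using int_in_pm_ext_basic_cone_coefficients[OF K f] by blast
  have "ext_mul j (f 0) (wedge j f) = 0"
    unfolding ext_mul_wedge using \<open>1 \<le> j\<close> by (intro wedge_eq_zero_if_repeated[of 0 "Suc j" 1]) auto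
  then have "\<epsilon> *\<^sub>R ext_mul j (f 0) (\<Sum>I\<in>?M. (\<gamma> I * \<sigma> I) *\<^sub>R basic_wedge j e' I) = 0"
    using \<gamma>(3) linear_scale[OF ext_mul_linear_right[of j "f 0"]] by simp
  then have "ext_mul j (\<Sum>i\<in>UNIV. h (f 0) $ i *\<^sub>R e' i) (\<Sum>I\<in>?M. (\<gamma> I * \<sigma> I) *\<^sub>R basic_wedge j e' I) = 0"
    using \<gamma>(2) by (simp add: h)
  then have "(\<Sum>i\<in>J. h (f 0) $ i * (\<gamma> (J - {i}) * \<sigma> (J - {i})) * s i) = \<phi> 0"
    using coordinate_ext_mul_basic_wedges[OF J \<phi> s, of "\<lambda>i. h (f 0) $ i" "\<lambda>I. \<gamma> I * \<sigma> I"] by simp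
  also have "\<phi> 0 = 0" by (rule linear_0[OF \<phi>(1)])
  finally have "(\<Sum>i\<in>J. \<gamma> (J - {i}) * (\<sigma> (J - {i}) * s i * h (f 0) $ i)) = 0"
    by (simp add: ac_simps)
  then show ?thesis using J \<gamma>(1)
    by (intro weighted_sum_eq_zero_imp_mixed_signs) (auto simp: card_ge_0_finite)
qed

lemma dim_subspace_in_closure_wedge_first_factors_le:
  fixes e' :: "'n::{finite,linorder} \<Rightarrow> real^'n::{finite,linorder}"
  assumes e': "is_basis e'" and \<sigma>: "\<And>I. \<sigma> I = 1 \<or> \<sigma> I = -1"
    and K: "proper_cone_in (ext_space j) K" "K \<subseteq> ext_basic_cone j e' \<sigma>" and "1 \<le> j"
    and L: "subspace L"
      "L \<subseteq> closure (wedge_first_factors j Q (int_in (ext_space j) K \<union> int_in (ext_space j) (uminus ` K)))"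
  shows "dim L \<le> j"
proof (rule ccontr)
  text \<open>Some \<open>j + 1\<close> coordinates of \<open>L\<close> in the basis \<open>e'\<close> can be prescribed freely, in particular
    with the signs that are excluded on the closed set \<open>C \<supseteq> wedge_first_factors\<close>.\<close>
  assume "\<not> dim L \<le> j"
  have span: "span (range e') = UNIV" and "inj e'" using e' by (auto simp: is_basis_def)
  obtain h :: "real^'n::{finite,linorder} \<Rightarrow> real^'n::{finite,linorder}"
    where h: "linear h" "inj h" "\<And>x. (\<Sum>i\<in>UNIV. h x $ i *\<^sub>R e' i) = x"
    using basis_coordinates[OF span \<open>inj e'\<close>] by blast
  have "dim (h ` L) = dim L" using h(1,2) by (intro dim_image_eq) (auto simp: inj_on_def inj_def)
  then obtain J where J: "card J = Suc j" "\<And>t. \<exists>y\<in>h ` L. \<forall>i\<in>J. y $ i = t i"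
    using subspace_coordinates_surjective[OF linear_subspace_image[OF h(1) L(1)], of "Suc j"]
      \<open>\<not> dim L \<le> j\<close> by auto
  have "\<exists>s\<in>{-1, 1}. ext_mul j (e' i) (basic_wedge j e' (J - {i})) = s *\<^sub>R basic_wedge (Suc j) e' J"
    if "i \<in> J" for i
    using ext_mul_basic_wedge(2)[of "J - {i}" j i e'] J(1) that by (simp add: insert_absorb card_ge_0_finite)
  then obtain s where s: "\<And>i. i \<in> J \<Longrightarrow> s i \<in> {-1, 1}"
    "\<And>i. i \<in> J \<Longrightarrow> ext_mul j (e' i) (basic_wedge j e' (J - {i})) = s i *\<^sub>R basic_wedge (Suc j) e' J"
    by metis
  define \<tau> where "\<tau> i = \<sigma> (J - {i}) * s i" for i
  define C where "C = {x. \<not> (\<forall>i\<in>J. 0 < \<tau> i * h x $ i) \<and> \<not> (\<forall>i\<in>J. \<tau> i * h x $ i < 0)}"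
  have "wedge_first_factors j Q (int_in (ext_space j) K \<union> int_in (ext_space j) (uminus ` K)) \<subseteq> C"
    using wedge_first_factor_mixed_signs[OF span h(3) K \<open>1 \<le> j\<close> J(1) s(2)]
    by (auto simp: wedge_first_factors_def C_def \<tau>_def)
  moreover have "continuous_on UNIV (\<lambda>x. \<tau> i * h x $ i)" for i
  proof -
    have "bounded_linear (\<lambda>x. h x $ i)"
      using h(1) by (intro bounded_linear_compose[OF bounded_linear_vec_nth]) (simp add: linear_conv_bounded_linear)
    then show ?thesis by (intro continuous_intros linear_continuous_on)
  qed
  then have "closed C" unfolding C_def using J(1) by (intro closed_mixed_signs) (auto simp: card_ge_0_finite)
  ultimately have "L \<subseteq> C" using L(2) closure_minimal by blast
  obtain x where "x \<in> L" "\<forall>i\<in>J. h x $ i = \<tau> i" using J(2)[of \<tau>] by blast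
  moreover have "\<tau> i * \<tau> i > 0" if "i \<in> J" for i using \<sigma>[of "J - {i}"] s(1)[OF that] by (auto simp: \<tau>_def)
  ultimately have "x \<notin> C" using J(1) by (auto simp: C_def card_ge_0_finite)
  then show False using \<open>L \<subseteq> C\<close> \<open>x \<in> L\<close> by blast
qed

lemma cone_of_rank_closure_wedge_first_factors:
  fixes e' :: "'n::{finite,linorder} \<Rightarrow> real^'n::{finite,linorder}"
    and K :: "(real^('n set)) set" and j :: nat
  defines "P \<equiv> int_in (ext_space j) K \<union> int_in (ext_space j) (uminus ` K)"
  assumes Q: "\<And>f y. Q (f(0 := y)) = Q f" and e': "is_basis e'" "\<And>I. \<sigma> I = 1 \<or> \<sigma> I = -1"
    and K: "proper_cone_in (ext_space j) K" "K \<subseteq> ext_basic_cone j e' \<sigma>"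
    and j: "1 \<le> j" "j \<le> CARD('n)" and ne: "closure (wedge_first_factors j Q P) \<noteq> {}"
  shows "cone_of_rank (closure (wedge_first_factors j Q P)) j"
proof -
  have P: "\<And>w c. w \<in> P \<Longrightarrow> c \<noteq> 0 \<Longrightarrow> c *\<^sub>R w \<in> P"
    unfolding P_def using K(1) by (intro int_in_pm_scaleR subspace_ext_space) (auto simp: proper_cone_in_def)
  have "0 \<notin> P" unfolding P_def using zero_notin_int_in_ext_space[OF K(1) j(2)] .
  show ?thesis
    unfolding cone_of_rank_def
    using closure_wedge_first_factors_scaleR[OF Q P j(1)]
      subspace_in_closure_wedge_first_factors[OF Q P \<open>0 \<notin> P\<close> j(1)] ne
      dim_subspace_in_closure_wedge_first_factors_le[OF e' K j(1)]
    by (auto simp: P_def)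
qed

lemma T_eq_closure_wedge_first_factors:
  assumes "2 \<le> j"
  shows "T K1 K j = closure (wedge_first_factors j (\<lambda>f. \<forall>i\<in>{1..j - 1}. f i \<in> T K1 K i)
    (int_in (ext_space j) (K j) \<union> int_in (ext_space j) (uminus ` K j)))"
proof -
  obtain m where "j = Suc (Suc m)" using assms by (metis add_2_eq_Suc le_Suc_ex)
  then show ?thesis by (simp add: wedge_first_factors_def)
qed

theorem theorem6:
  fixes K1 :: "(real ^ ('n::{finite,linorder})) set"
    and K :: "nat \<Rightarrow> (real ^ ('n set)) set"
  assumes "proper_cone_in UNIV K1"
    and "\<forall>j\<in>{2..CARD('n)}. proper_cone_in (ext_space j) (K j)"
    and "\<forall>j\<in>{2..CARD('n)}. \<exists>e' K'. is_basis e' \<and> is_ext_basic_cone j e' K' \<and> K j \<subseteq> K'"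
  shows "\<forall>j\<in>{2..CARD('n)}. T K1 K j \<noteq> {} \<longrightarrow> cone_of_rank (T K1 K j) j"
proof (intro ballI impI)
  fix j assume j: "j \<in> {2..CARD('n)}" and "T K1 K j \<noteq> {}"
  obtain e' \<sigma> where e': "is_basis e'" "\<And>I. \<sigma> I = 1 \<or> \<sigma> I = -1" "K j \<subseteq> ext_basic_cone j e' \<sigma>"
    using assms(3) j unfolding is_ext_basic_cone_def by blast
  have "2 \<le> j" using j by simp
  show "cone_of_rank (T K1 K j) j"
    using \<open>T K1 K j \<noteq> {}\<close> unfolding T_eq_closure_wedge_first_factors[OF \<open>2 \<le> j\<close>]
    by (intro cone_of_rank_closure_wedge_first_factors[OF _ e'(1,2) _ e'(3)]) (use j assms(2) in auto)
qed

end
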